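(* Let $F$, $H$, $X$, $\Omega$, $Q$ and the sequences generated by the IneIREG method be as described in the context, and suppose $H$ is $\mu$-strongly monotone for some $\mu>0$. Let $\varepsilon>0$, let $\mathcal D_0>0$ satisfy $\mathcal D_0\ge\overline\lambda C_HD_X/\underline\lambda$, and suppose $\eta_k\equiv\eta:=\varepsilon/(2\mathcal D_0)$ for all $k\ge0$; $\lambda_k\in[\underline\lambda,\overline\lambda]$ for all $k\ge0$ with $0<\underline\lambda\le\overline\lambda<1/L$, $L:=L_F+\eta L_H$; and $\alpha_0\in[0,1]$ and $\alpha_{k+1}\le(1-\beta_k)\alpha_k$ for all $k\ge0$, where $\beta_k:=\big(\frac{1}{1-\lambda_k^2L^2}+\frac{1}{2\lambda_k\eta\mu}\big)^{-1}$. Define $p_k:=\big(\prod_{i=0}^k(1-\beta_i)\big)^{-1}$ for $k\ge0$, and for $k\ge1$ $\Lambda_k:=\sum_{j=0}^{k-1}\lambda_j\eta p_j$ and $\overline y_k:=\Lambda_k^{-1}\sum_{j=0}^{k-1}\lambda_j\eta p_jy_j$. Let $k\ge1$. If $$k\ge\Big\lceil\Big(\frac{1}{1-\overline\lambda^2L^2}+\frac{\mathcal D_0}{\underline\lambda\mu\varepsilon}\Big)\log\Big(\frac{2(k+1)D_X^2}{\underline\lambda\varepsilon}\Big)\Big\rceil,$$ then $0\le\mathrm{Gap}(\overline y_k,F,X)\le\varepsilon$.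
   Context: Work in $\mathbb{R}^n$ with Euclidean inner product $\langle\cdot,\cdot\rangle$ and norm $\|\cdot\|$; $\log$ is the natural logarithm. The maps $F\colon \mathrm{Dom}\,F\to\mathbb{R}^n$ and $H\colon\mathrm{Dom}\,H\to\mathbb{R}^n$ are monotone and Lipschitz continuous with constants $L_F>0$ and $L_H>0$; $H$ is $\mu$-strongly monotone means $\langle H(x)-H(y),x-y\rangle\ge\mu\|x-y\|^2$ for all $x,y\in\mathrm{Dom}\,H$. $X$ is a nonempty compact convex set and $\Omega$ a nonempty closed convex set with $X\subset\Omega\subset\mathrm{Dom}\,F\cap\mathrm{Dom}\,H$; $P_X,P_\Omega$ denote orthogonal projections. $Q:=\{x\in X:\langle F(x),y-x\rangle\ge0\ \forall y\in X\}$ is assumed nonempty. $D_X:=\sup_{x,y\in X}\|x-y\|$, $C_H:=\sup_{x\in X}\|H(x)\|$. $\mathrm{Gap}(z,F,X):=\sup_{x\in X}\langle F(x),z-x\rangle$. IneIREG method: start with $x_0=x_{-1}\in X$; for $k=0,1,\dots$, with parameters $\alpha_k\ge0$, $\lambda_k>0$, $\eta_k>0$, set $w_k=x_k+\alpha_k(x_k-x_{k-1})$, $w'_k=P_\Omega(w_k)$, $y_k=P_X\big(w_k-\lambda_k(F(w'_k)+\eta_kH(w'_k))\big)$, $x_{k+1}=P_X\big(w_k-\lambda_k(F(y_k)+\eta_kH(y_k))\big)$. *)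

theory Defs
  imports "HOL-Analysis.Analysis"
begin

definition monotone_op :: "('a::real_inner \<Rightarrow> 'a) \<Rightarrow> 'a set \<Rightarrow> bool" where
  "monotone_op F D \<longleftrightarrow> (\<forall>x\<in>D. \<forall>y\<in>D. inner (F x - F y) (x - y) \<ge> 0)"

definition strongly_monotone_op :: "real \<Rightarrow> ('a::real_inner \<Rightarrow> 'a) \<Rightarrow> 'a set \<Rightarrow> bool" where
  "strongly_monotone_op \<mu> F D \<longleftrightarrow> (\<forall>x\<in>D. \<forall>y\<in>D. inner (F x - F y) (x - y) \<ge> \<mu> * (norm (x - y))\<^sup>2)"

definition VI_sol :: "('a::real_inner \<Rightarrow> 'a) \<Rightarrow> 'a set \<Rightarrow> 'a set" where
  "VI_sol F X = {x \<in> X. \<forall>y\<in>X. inner (F x) (y - x) \<ge> 0}"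

definition Gap :: "'a::real_inner \<Rightarrow> ('a \<Rightarrow> 'a) \<Rightarrow> 'a set \<Rightarrow> real" where
  "Gap z F X = (SUP x\<in>X. inner (F x) (z - x))"

abbreviation proj :: "'a::euclidean_space set \<Rightarrow> 'a \<Rightarrow> 'a" where
  "proj S x \<equiv> closest_point S x"

end

(*
  For every u in X, one extragradient step for the regularized operator G = F + eta H, which is
  (L_F + eta L_H)-Lipschitz and (eta mu)-strongly monotone, gives
    2 lam_k <G u, y_k - u> <= (1 - beta_k) |w_k - u|^2 - |x_(k+1) - u|^2.
  Multiplying by p_k = prod_(i<=k) (1 - beta_i)^-1 makes the right-hand sides telescope; the
  inertial extrapolation costs at most 2 D_X^2 per step because p_(k-1) alpha_k is nonincreasing
  and at most 1. Bounding eta <H u, y_k - u> by eta C_H D_X and averaging yields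
    <F u, ybar_k - u> <= eta (k + 1) D_X^2 / Lambda_k + eta C_H D_X.
  The choice of eta makes the second term at most eps/2; since beta_k is bounded below, p_k grows
  like exp (k / M), and the lower bound on k makes the first term at most eps/2 as well.
*)
theory Submission
  imports Defs
begin

lemma monotone_op_subset: "monotone_op F D \<Longrightarrow> E \<subseteq> D \<Longrightarrow> monotone_op F E"
  unfolding monotone_op_def by blast

lemma strongly_monotone_op_subset:
  "strongly_monotone_op \<mu> F D \<Longrightarrow> E \<subseteq> D \<Longrightarrow> strongly_monotone_op \<mu> F E"
  unfolding strongly_monotone_op_def by blast

lemma strongly_monotone_op_add_scaled:
  assumes F: "monotone_op F D" and H: "strongly_monotone_op \<mu> H D" and "0 \<le> \<eta>"
  shows "strongly_monotone_op (\<eta> * \<mu>) (\<lambda>z. F z + \<eta> *\<^sub>R H z) D"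
  unfolding strongly_monotone_op_def
proof (intro ballI)
  fix x y assume "x \<in> D" "y \<in> D"
  then have "0 \<le> inner (F x - F y) (x - y)" "\<mu> * (norm (x - y))\<^sup>2 \<le> inner (H x - H y) (x - y)"
    using F H unfolding monotone_op_def strongly_monotone_op_def by auto
  then have "\<eta> * \<mu> * (norm (x - y))\<^sup>2 \<le> inner (F x - F y) (x - y) + \<eta> * inner (H x - H y) (x - y)"
    using mult_left_mono[OF _ \<open>0 \<le> \<eta>\<close>] by (fastforce simp: mult.assoc)
  then show "\<eta> * \<mu> * (norm (x - y))\<^sup>2 \<le> inner (F x + \<eta> *\<^sub>R H x - (F y + \<eta> *\<^sub>R H y)) (x - y)"
    by (simp add: inner_simps algebra_simps)
qed

lemma extragradient_projection_bound:
  fixes w u y x' g\<^sub>w g\<^sub>y :: "'a::real_inner"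
  assumes proj_x': "inner (w - lam *\<^sub>R g\<^sub>y - x') (u - x') \<le> 0"
    and proj_y: "inner (w - lam *\<^sub>R g\<^sub>w - y) (x' - y) \<le> 0"
    and lip: "norm (g\<^sub>w - g\<^sub>y) \<le> L * norm (w - y)"
    and "lam > 0"
  shows "(norm (x' - u))\<^sup>2
    \<le> (norm (w - u))\<^sup>2 - (1 - lam\<^sup>2 * L\<^sup>2) * (norm (w - y))\<^sup>2 - 2 * lam * inner g\<^sub>y (y - u)"
proof -
  have expand: "(norm (w - u))\<^sup>2 - (norm (x' - u))\<^sup>2 - (norm (w - y))\<^sup>2 - (norm (x' - y))\<^sup>2
      + 2 * lam * inner (g\<^sub>w - g\<^sub>y) (x' - y) - 2 * lam * inner g\<^sub>y (y - u)
    = - 2 * inner (w - lam *\<^sub>R g\<^sub>y - x') (u - x') - 2 * inner (w - lam *\<^sub>R g\<^sub>w - y) (x' - y)"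
    by (simp add: power2_norm_eq_inner inner_simps inner_commute algebra_simps)
  have "inner (g\<^sub>w - g\<^sub>y) (x' - y) \<le> L * norm (w - y) * norm (x' - y)"
    by (metis Cauchy_Schwarz_ineq2 lip mult_right_mono norm_ge_zero order_trans abs_le_iff)
  moreover have "2 * lam * (L * norm (w - y) * norm (x' - y))
      \<le> lam\<^sup>2 * L\<^sup>2 * (norm (w - y))\<^sup>2 + (norm (x' - y))\<^sup>2"
    using sum_squares_ge_zero[of "lam * L * norm (w - y) - norm (x' - y)" 0]
    by (simp add: power2_eq_square algebra_simps)
  ultimately have "2 * lam * inner (g\<^sub>w - g\<^sub>y) (x' - y)
      \<le> lam\<^sup>2 * L\<^sup>2 * (norm (w - y))\<^sup>2 + (norm (x' - y))\<^sup>2"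
    using \<open>lam > 0\<close> by (smt (verit) mult_left_mono)
  then show ?thesis
    using expand proj_x' proj_y by (simp add: algebra_simps)
qed

lemma norm_diff_sq_le_weighted:
  fixes w y u :: "'a::real_normed_vector"
  assumes "a > 0" "b > 0"
  shows "inverse (1 / a + 1 / b) * (norm (w - u))\<^sup>2 \<le> a * (norm (w - y))\<^sup>2 + b * (norm (y - u))\<^sup>2"
proof -
  define s t where "s = norm (w - y)" and "t = norm (y - u)"
  have "norm (w - u) \<le> s + t"
    unfolding s_def t_def using norm_triangle_ineq[of "w - y" "y - u"] by simp
  then have "(norm (w - u))\<^sup>2 \<le> (s + t)\<^sup>2" by (simp add: power_mono)
  moreover have "a * b * (s + t)\<^sup>2 \<le> (a + b) * (a * s\<^sup>2 + b * t\<^sup>2)"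
    using sum_squares_ge_zero[of "a * s - b * t" 0] by (simp add: power2_eq_square algebra_simps)
  ultimately have "a * b * (norm (w - u))\<^sup>2 \<le> (a + b) * (a * s\<^sup>2 + b * t\<^sup>2)"
    using assms by (smt (verit) mult_left_mono mult_pos_pos)
  moreover have "inverse (1 / a + 1 / b) = a * b / (a + b)"
    using assms by (simp add: field_simps)
  ultimately show ?thesis
    using assms unfolding s_def t_def by (simp add: field_simps)
qed

lemma extragradient_step_strongly_monotone:
  fixes G :: "'a::euclidean_space \<Rightarrow> 'a"
  assumes G_lip: "L-lipschitz_on \<Omega> G" and G_strong: "strongly_monotone_op m G \<Omega>"
    and X: "convex X" "closed X" and \<Omega>: "convex \<Omega>" "closed \<Omega>" and "X \<subseteq> \<Omega>"
    and "lam > 0" "m > 0" "lam\<^sup>2 * L\<^sup>2 < 1"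
    and y: "y = proj X (w - lam *\<^sub>R G (proj \<Omega> w))"
    and x': "x' = proj X (w - lam *\<^sub>R G y)"
    and u: "u \<in> X"
  shows "2 * lam * inner (G u) (y - u)
    \<le> (1 - inverse (1 / (1 - lam\<^sup>2 * L\<^sup>2) + 1 / (2 * lam * m))) * (norm (w - u))\<^sup>2 - (norm (x' - u))\<^sup>2"
proof -
  have "X \<noteq> {}" "\<Omega> \<noteq> {}" using u \<open>X \<subseteq> \<Omega>\<close> by auto
  then have in_sets: "y \<in> X" "x' \<in> X" "proj \<Omega> w \<in> \<Omega>"
    using y x' closest_point_in_set X(2) \<Omega>(2) by blast+
  have "norm (G (proj \<Omega> w) - G y) \<le> L * dist (proj \<Omega> w) y"
    using lipschitz_onD[OF G_lip] in_sets \<open>X \<subseteq> \<Omega>\<close> by (auto simp: dist_norm)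
  also have "\<dots> \<le> L * norm (w - y)"
  proof -
    have "proj \<Omega> y = y" using in_sets \<open>X \<subseteq> \<Omega>\<close> closest_point_self by blast
    then have "dist (proj \<Omega> w) y \<le> dist w y"
      using closest_point_lipschitz[OF \<Omega> \<open>\<Omega> \<noteq> {}\<close>, of w y] by simp
    then show ?thesis
      using lipschitz_on_nonneg[OF G_lip] by (simp add: dist_norm mult_left_mono)
  qed
  finally have descent: "(norm (x' - u))\<^sup>2
      \<le> (norm (w - u))\<^sup>2 - (1 - lam\<^sup>2 * L\<^sup>2) * (norm (w - y))\<^sup>2 - 2 * lam * inner (G y) (y - u)"
    using extragradient_projection_bound closest_point_dot[OF X u] closest_point_dot[OF X \<open>x' \<in> X\<close>]
      y x' \<open>lam > 0\<close> by blast
  have "m * (norm (y - u))\<^sup>2 \<le> inner (G y - G u) (y - u)"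
    using G_strong in_sets u \<open>X \<subseteq> \<Omega>\<close> unfolding strongly_monotone_op_def by blast
  then have "2 * lam * (m * (norm (y - u))\<^sup>2 + inner (G u) (y - u)) \<le> 2 * lam * inner (G y) (y - u)"
    using \<open>lam > 0\<close> by (intro mult_left_mono) (auto simp: inner_diff_left)
  moreover have "inverse (1 / (1 - lam\<^sup>2 * L\<^sup>2) + 1 / (2 * lam * m)) * (norm (w - u))\<^sup>2
      \<le> (1 - lam\<^sup>2 * L\<^sup>2) * (norm (w - y))\<^sup>2 + 2 * lam * m * (norm (y - u))\<^sup>2"
    using \<open>lam > 0\<close> \<open>m > 0\<close> \<open>lam\<^sup>2 * L\<^sup>2 < 1\<close>
    by (intro norm_diff_sq_le_weighted) simp_all
  ultimately show ?thesis
    using descent by (simp add: algebra_simps)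
qed

lemma norm_sq_inertial_le:
  fixes x x\<^sub>p u :: "'a::real_inner"
  assumes "0 \<le> \<alpha>" "\<alpha> \<le> 1" "norm (x - x\<^sub>p) \<le> \<delta>"
  shows "(norm (x + \<alpha> *\<^sub>R (x - x\<^sub>p) - u))\<^sup>2
    \<le> (1 + \<alpha>) * (norm (x - u))\<^sup>2 - \<alpha> * (norm (x\<^sub>p - u))\<^sup>2 + 2 * \<alpha> * \<delta>\<^sup>2"
proof -
  have identity: "(norm (x + \<alpha> *\<^sub>R (x - x\<^sub>p) - u))\<^sup>2
      = (1 + \<alpha>) * (norm (x - u))\<^sup>2 - \<alpha> * (norm (x\<^sub>p - u))\<^sup>2 + \<alpha> * ((1 + \<alpha>) * (norm (x - x\<^sub>p))\<^sup>2)"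
    by (simp add: power2_norm_eq_inner inner_simps inner_commute algebra_simps)
  have "(1 + \<alpha>) * (norm (x - x\<^sub>p))\<^sup>2 \<le> 2 * \<delta>\<^sup>2"
    using assms by (intro mult_mono power_mono) auto
  then have "\<alpha> * ((1 + \<alpha>) * (norm (x - x\<^sub>p))\<^sup>2) \<le> \<alpha> * (2 * \<delta>\<^sup>2)"
    using \<open>0 \<le> \<alpha>\<close> by (rule mult_left_mono)
  then show ?thesis unfolding identity by (simp add: mult_ac)
qed

lemma inertial_telescoping_sum_le:
  fixes r d q c :: "nat \<Rightarrow> real"
  assumes r: "\<And>j. r j \<le> q j * d j - q (Suc j) * d (Suc j) + c j * (d j - d (j - 1))"
    and d: "\<And>j. 0 \<le> d j \<and> d j \<le> b"
    and c: "\<And>j. 0 \<le> c j" "\<And>j. c (Suc j) \<le> c j" "c 0 \<le> 1"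
    and q: "\<And>j. 0 \<le> q j" "q 0 = 1"
  shows "(\<Sum>j<n. r j) \<le> 2 * b"
  \<comment> \<open>At \<open>j = 0\<close> the truncated subtraction gives \<open>d (j - 1) = d 0\<close>, matching \<open>x\<^sub>-\<^sub>1 = x\<^sub>0\<close>.\<close>
proof -
  have telescoped: "(\<Sum>j<n. r j) \<le> d 0 - q n * d n + b * (c 0 - c n) + c n * d (n - 1)" for n
  proof (induction n)
    case 0
    show ?case using q c(1)[of 0] d[of 0] by simp
  next
    case (Suc n)
    have "c n * d n \<le> b * (c n - c (Suc n)) + c (Suc n) * d n"
      using mult_right_mono[OF c(2)[of n], of "b - d n"] d[of n] by (simp add: algebra_simps)
    then show ?case using Suc.IH r[of n] by (simp add: algebra_simps)
  qed
  have "0 \<le> q n * d n" "c n * d (n - 1) \<le> c n * b" "b * c 0 \<le> b"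
    using q d c(1) c(3) d[of 0] by (auto intro: mult_left_mono mult_nonneg_nonneg mult_left_le order_trans)
  then show ?thesis using telescoped[of n] d[of 0] by (simp add: algebra_simps)
qed

lemma prod_one_minus_le_exp_neg_sum:
  fixes \<beta> :: "'i \<Rightarrow> real"
  assumes "\<And>i. i \<in> I \<Longrightarrow> \<beta> i \<le> 1"
  shows "(\<Prod>i\<in>I. 1 - \<beta> i) \<le> exp (- (\<Sum>i\<in>I. \<beta> i))"
proof (cases "finite I")
  case True
  have "(\<Prod>i\<in>I. 1 - \<beta> i) \<le> (\<Prod>i\<in>I. exp (- \<beta> i))"
    using assms exp_ge_add_one_self[of "- \<beta> i" for i] by (intro prod_mono) auto
  then show ?thesis using True by (simp add: exp_sum sum_negf[symmetric])
qed simp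

lemma Gap_weighted_average_le:
  fixes F :: "'a::real_inner \<Rightarrow> 'a"
  assumes "convex X" "finite I" "\<And>i. i \<in> I \<Longrightarrow> 0 \<le> \<omega> i" "0 < sum \<omega> I"
    and y: "\<And>i. i \<in> I \<Longrightarrow> y i \<in> X"
    and bound: "\<And>u. u \<in> X \<Longrightarrow> (\<Sum>i\<in>I. \<omega> i * inner (F u) (y i - u)) \<le> \<epsilon> * sum \<omega> I"
  defines "y\<^sub>\<omega> \<equiv> inverse (sum \<omega> I) *\<^sub>R (\<Sum>i\<in>I. \<omega> i *\<^sub>R y i)"
  shows "0 \<le> Gap y\<^sub>\<omega> F X \<and> Gap y\<^sub>\<omega> F X \<le> \<epsilon>"
proof -
  have "(\<Sum>i\<in>I. inverse (sum \<omega> I) * \<omega> i) = 1"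
    using \<open>0 < sum \<omega> I\<close> by (simp add: sum_distrib_left[symmetric])
  then have avg_X: "y\<^sub>\<omega> \<in> X"
    unfolding y\<^sub>\<omega>_def scaleR_sum_right scaleR_scaleR
    using assms by (intro convex_sum) auto
  have gap_term: "inner (F u) (y\<^sub>\<omega> - u) \<le> \<epsilon>" if "u \<in> X" for u
  proof -
    have "(\<Sum>i\<in>I. \<omega> i * inner (F u) (y i - u))
        = inner (F u) (\<Sum>i\<in>I. \<omega> i *\<^sub>R y i) - sum \<omega> I * inner (F u) u"
      by (simp add: inner_sum_right inner_diff_right right_diff_distrib sum_subtractf sum_distrib_right)
    then have "inner (F u) (y\<^sub>\<omega> - u) = inverse (sum \<omega> I) * (\<Sum>i\<in>I. \<omega> i * inner (F u) (y i - u))"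
      using \<open>0 < sum \<omega> I\<close> by (simp add: y\<^sub>\<omega>_def inner_diff_right right_diff_distrib)
    also have "\<dots> \<le> \<epsilon>"
      using bound[OF that] \<open>0 < sum \<omega> I\<close> by (simp add: field_simps)
    finally show ?thesis .
  qed
  have "bdd_above ((\<lambda>u. inner (F u) (y\<^sub>\<omega> - u)) ` X)"
    using gap_term by (intro bdd_aboveI2)
  then have "inner (F y\<^sub>\<omega>) (y\<^sub>\<omega> - y\<^sub>\<omega>) \<le> Gap y\<^sub>\<omega> F X"
    unfolding Gap_def by (rule cSUP_upper[OF avg_X])
  moreover have "Gap y\<^sub>\<omega> F X \<le> \<epsilon>"
    unfolding Gap_def using avg_X gap_term by (intro cSUP_least) auto
  ultimately show ?thesis by simp
qed

lemma power2_mult_less_1: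
  fixes lam L :: real
  assumes "0 < L" "0 \<le> lam" "lam < 1 / L"
  shows "lam\<^sup>2 * L\<^sup>2 < 1"
proof -
  have "lam * L < 1" using assms by (simp add: field_simps)
  then show ?thesis
    using assms by (simp add: power_mult_distrib[symmetric] power_less_one_iff)
qed

lemma regularized_rate_mono:
  fixes lam lam\<^sub>l\<^sub>o lam\<^sub>h\<^sub>i L m :: real
  assumes "0 < lam\<^sub>l\<^sub>o" "lam\<^sub>l\<^sub>o \<le> lam" "lam \<le> lam\<^sub>h\<^sub>i" "lam\<^sub>h\<^sub>i\<^sup>2 * L\<^sup>2 < 1" "0 < m"
  shows "inverse (1 / (1 - lam\<^sub>h\<^sub>i\<^sup>2 * L\<^sup>2) + 1 / (2 * lam\<^sub>l\<^sub>o * m))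
    \<le> inverse (1 / (1 - lam\<^sup>2 * L\<^sup>2) + 1 / (2 * lam * m))"
proof (rule le_imp_inverse_le)
  have "lam\<^sup>2 * L\<^sup>2 \<le> lam\<^sub>h\<^sub>i\<^sup>2 * L\<^sup>2"
    using assms by (intro mult_right_mono power_mono) auto
  then have "1 / (1 - lam\<^sup>2 * L\<^sup>2) \<le> 1 / (1 - lam\<^sub>h\<^sub>i\<^sup>2 * L\<^sup>2)"
    using assms by (intro divide_left_mono) auto
  moreover have "1 / (2 * lam * m) \<le> 1 / (2 * lam\<^sub>l\<^sub>o * m)"
    using assms by (intro divide_left_mono mult_right_mono mult_pos_pos) auto
  ultimately show "1 / (1 - lam\<^sup>2 * L\<^sup>2) + 1 / (2 * lam * m) \<le> 1 / (1 - lam\<^sub>h\<^sub>i\<^sup>2 * L\<^sup>2) + 1 / (2 * lam\<^sub>l\<^sub>o * m)"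
    by linarith
  have "lam\<^sup>2 * L\<^sup>2 < 1"
    using \<open>lam\<^sup>2 * L\<^sup>2 \<le> lam\<^sub>h\<^sub>i\<^sup>2 * L\<^sup>2\<close> assms(4) by linarith
  then show "0 < 1 / (1 - lam\<^sup>2 * L\<^sup>2) + 1 / (2 * lam * m)"
    using assms by (intro add_pos_pos) auto
qed

lemma le_exp_of_ceiling_mult_ln_le:
  fixes M A :: real
  assumes "0 < M" "of_int \<lceil>M * ln A\<rceil> \<le> real k"
  shows "A \<le> exp (k / M)"
proof (cases "A > 0")
  case True
  have "M * ln A \<le> k" using assms(2) le_of_int_ceiling[of "M * ln A"] by linarith
  then have "ln A \<le> k / M" using \<open>0 < M\<close> by (simp add: field_simps)
  then show ?thesis using True by (metis exp_le_cancel_iff exp_ln)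
qed (auto intro: order_trans[OF _ less_imp_le[OF exp_gt_zero]])

locale ineireg =
  fixes F H :: "'a::euclidean_space \<Rightarrow> 'a"
    and DomF DomH X \<Omega> :: "'a set"
    and LF LH \<mu> \<eta> L :: real
    and lam \<alpha> \<beta> :: "nat \<Rightarrow> real"
    and x w w' y :: "nat \<Rightarrow> 'a"
  assumes F_mono: "monotone_op F DomF" and F_lip: "LF-lipschitz_on DomF F"
    and H_lip: "LH-lipschitz_on DomH H" and H_strong: "strongly_monotone_op \<mu> H DomH"
    and mu_pos: "\<mu> > 0"
    and X_compact: "compact X" and X_convex: "convex X"
    and Om_closed: "closed \<Omega>" and Om_convex: "convex \<Omega>"
    and X_sub: "X \<subseteq> \<Omega>" and Om_sub: "\<Omega> \<subseteq> DomF \<inter> DomH"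
    and eta_pos: "\<eta> > 0" and L_def: "L = LF + \<eta> * LH"
    and lam_pos: "\<And>j. lam j > 0" and lam_L: "\<And>j. (lam j)\<^sup>2 * L\<^sup>2 < 1"
    and beta_def: "\<And>j. \<beta> j = inverse (1 / (1 - (lam j)\<^sup>2 * L\<^sup>2) + 1 / (2 * lam j * \<eta> * \<mu>))"
    and alpha_nonneg: "\<And>j. \<alpha> j \<ge> 0" and alpha0: "\<alpha> 0 \<le> 1"
    and alpha_dec: "\<And>j. \<alpha> (Suc j) \<le> (1 - \<beta> j) * \<alpha> j"
    and x0: "x 0 \<in> X"
    and w_def: "\<And>j. w j = x j + \<alpha> j *\<^sub>R (x j - (if j = 0 then x 0 else x (j - 1)))"
    and w'_def: "\<And>j. w' j = proj \<Omega> (w j)"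
    and y_def: "\<And>j. y j = proj X (w j - lam j *\<^sub>R (F (w' j) + \<eta> *\<^sub>R H (w' j)))"
    and x_def: "\<And>j. x (Suc j) = proj X (w j - lam j *\<^sub>R (F (y j) + \<eta> *\<^sub>R H (y j)))"
begin

text \<open>The paper's \<open>p\<^sub>j\<close> is \<open>growth (Suc j)\<close>.\<close>

definition growth :: "nat \<Rightarrow> real"
  where "growth j = inverse (\<Prod>i<j. 1 - \<beta> i)"

definition weight :: "nat \<Rightarrow> real"
  where "weight j = lam j * \<eta> * growth (Suc j)"

definition ergodic_avg :: "nat \<Rightarrow> 'a"
  where "ergodic_avg n = inverse (\<Sum>j<n. weight j) *\<^sub>R (\<Sum>j<n. weight j *\<^sub>R y j)"

definition C\<^sub>H :: real
  where "C\<^sub>H = (SUP z\<in>X. norm (H z))"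

lemma beta_bounds: "0 < \<beta> j" "\<beta> j < 1"
proof -
  have "1 \<le> 1 / (1 - (lam j)\<^sup>2 * L\<^sup>2)" "0 < 1 / (2 * lam j * \<eta> * \<mu>)"
    using lam_L[of j] lam_pos[of j] eta_pos mu_pos by (auto simp: field_simps)
  then have "1 < 1 / (1 - (lam j)\<^sup>2 * L\<^sup>2) + 1 / (2 * lam j * \<eta> * \<mu>)"
    by linarith
  then show "0 < \<beta> j" "\<beta> j < 1"
    unfolding beta_def by (simp_all add: inverse_less_1_iff)
qed

lemma growth_0: "growth 0 = 1"
  unfolding growth_def by simp

lemma growth_Suc: "growth (Suc j) * (1 - \<beta> j) = growth j"
  using beta_bounds(2)[of j] unfolding growth_def by (simp add: inverse_mult_distrib)

lemma growth_ge_1: "1 \<le> growth j"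
proof -
  have "0 < (\<Prod>i<j. 1 - \<beta> i)" "(\<Prod>i<j. 1 - \<beta> i) \<le> 1"
    using beta_bounds by (simp_all add: prod_pos prod_le_1 less_imp_le)
  then show ?thesis unfolding growth_def by (rule one_le_inverse)
qed

lemma growth_ge_exp:
  assumes "\<And>j. inverse M \<le> \<beta> j"
  shows "exp (n / M) \<le> growth n"
proof -
  have "(\<Prod>i<n. 1 - \<beta> i) \<le> exp (- (\<Sum>i<n. \<beta> i))"
    using beta_bounds by (intro prod_one_minus_le_exp_neg_sum less_imp_le)
  also have "\<dots> \<le> exp (- (n / M))"
    using sum_mono[of "{..<n}" "\<lambda>_. inverse M" \<beta>] assms by (simp add: divide_inverse)
  finally have "(\<Prod>i<n. 1 - \<beta> i) \<le> exp (- (n / M))" .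
  moreover have "0 < (\<Prod>i<n. 1 - \<beta> i)"
    using beta_bounds(2) by (simp add: prod_pos)
  ultimately have "inverse (exp (- (n / M))) \<le> growth n"
    unfolding growth_def by (rule le_imp_inverse_le)
  then show ?thesis by (simp add: exp_minus)
qed

lemma scaled_alpha_decreasing: "growth (Suc j) * \<alpha> (Suc j) \<le> growth j * \<alpha> j"
proof -
  have "growth (Suc j) * \<alpha> (Suc j) \<le> growth (Suc j) * ((1 - \<beta> j) * \<alpha> j)"
    using alpha_dec order_trans[OF zero_le_one growth_ge_1] by (rule mult_left_mono)
  then show ?thesis using growth_Suc by (metis mult.assoc)
qed

lemma scaled_alpha_le_1: "growth j * \<alpha> j \<le> 1"
  by (induction j) (use alpha0 growth_0 scaled_alpha_decreasing order_trans in auto)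

lemma alpha_le_1: "\<alpha> j \<le> 1"
proof -
  have "1 * \<alpha> j \<le> growth j * \<alpha> j"
    using growth_ge_1 alpha_nonneg by (rule mult_right_mono)
  then show ?thesis using scaled_alpha_le_1[of j] by simp
qed

lemma iterates_in_X: "x j \<in> X" "y j \<in> X"
proof -
  have "closed X" "X \<noteq> {}" using X_compact x0 by (auto intro: compact_imp_closed)
  then show "x j \<in> X"
    using x0 x_def closest_point_in_set by (cases j) auto
  show "y j \<in> X"
    using \<open>closed X\<close> \<open>X \<noteq> {}\<close> y_def closest_point_in_set by simp
qed

lemma norm_H_le_C\<^sub>H:
  assumes "u \<in> X"
  shows "norm (H u) \<le> C\<^sub>H"
proof -
  have "norm (H z) \<le> norm (H (x 0)) + LH * diameter X" if "z \<in> X" for z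
  proof -
    have "z \<in> DomH" "x 0 \<in> DomH" using that x0 X_sub Om_sub by auto
    then have "norm (H z - H (x 0)) \<le> LH * dist z (x 0)"
      using lipschitz_onD[OF H_lip] by (simp add: dist_norm)
    also have "\<dots> \<le> LH * diameter X"
      using diameter_bounded_bound[OF compact_imp_bounded[OF X_compact] that x0]
        lipschitz_on_nonneg[OF H_lip] by (rule mult_left_mono)
    finally show ?thesis using norm_triangle_sub[of "H z" "H (x 0)"] by linarith
  qed
  then show ?thesis
    unfolding C\<^sub>H_def using assms by (intro cSUP_upper bdd_aboveI2) auto
qed

lemma descent_inequality:
  assumes u: "u \<in> X"
  shows "2 * lam j * inner (F u) (y j - u)
    \<le> (1 - \<beta> j) * (norm (w j - u))\<^sup>2 - (norm (x (Suc j) - u))\<^sup>2 + 2 * lam j * \<eta> * C\<^sub>H * diameter X"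
proof -
  define G where "G z = F z + \<eta> *\<^sub>R H z" for z
  have "L-lipschitz_on \<Omega> G"
    unfolding G_def L_def using Om_sub eta_pos
    by (intro lipschitz_on_add lipschitz_on_cmult_nonneg lipschitz_on_subset[OF F_lip]
        lipschitz_on_subset[OF H_lip]) auto
  moreover have "strongly_monotone_op (\<eta> * \<mu>) G \<Omega>"
    unfolding G_def using Om_sub eta_pos
    by (intro strongly_monotone_op_add_scaled monotone_op_subset[OF F_mono]
        strongly_monotone_op_subset[OF H_strong]) auto
  ultimately have "2 * lam j * inner (G u) (y j - u)
      \<le> (1 - \<beta> j) * (norm (w j - u))\<^sup>2 - (norm (x (Suc j) - u))\<^sup>2"
    using extragradient_step_strongly_monotone[of L \<Omega> G "\<eta> * \<mu>" X "lam j"]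
      X_convex compact_imp_closed[OF X_compact] Om_convex Om_closed X_sub lam_pos lam_L
      eta_pos mu_pos y_def w'_def x_def u
    by (simp add: G_def beta_def mult.assoc)
  moreover have "- inner (H u) (y j - u) \<le> C\<^sub>H * diameter X"
  proof -
    have "- inner (H u) (y j - u) \<le> norm (H u) * norm (y j - u)"
      using Cauchy_Schwarz_ineq2[of "H u" "y j - u"] by linarith
    also have "\<dots> \<le> C\<^sub>H * diameter X"
      using norm_H_le_C\<^sub>H[OF u] iterates_in_X(2)[of j] u
        diameter_bounded_bound[OF compact_imp_bounded[OF X_compact]]
      by (intro mult_mono) (auto simp: dist_norm order_trans[OF norm_ge_zero])
    finally show ?thesis .
  qed
  then have "2 * lam j * \<eta> * (- inner (H u) (y j - u)) \<le> 2 * lam j * \<eta> * (C\<^sub>H * diameter X)"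
    using lam_pos[of j] eta_pos by (intro mult_left_mono) auto
  ultimately show ?thesis
    unfolding G_def by (simp add: inner_add_left algebra_simps)
qed

lemma scaled_inertial_bound:
  assumes u: "u \<in> X"
  defines "d \<equiv> \<lambda>j. (norm (x j - u))\<^sup>2"
  shows "growth j * (norm (w j - u))\<^sup>2
    \<le> growth j * d j + growth j * \<alpha> j * (d j - d (j - 1)) + 2 * (diameter X)\<^sup>2"
proof -
  have w: "w j = x j + \<alpha> j *\<^sub>R (x j - x (j - 1))"
    using w_def[of j] by (cases j) simp_all
  have "dist (x j) (x (j - 1)) \<le> diameter X"
    using compact_imp_bounded[OF X_compact] iterates_in_X(1) iterates_in_X(1)
    by (rule diameter_bounded_bound)
  then have "(norm (w j - u))\<^sup>2 \<le> (1 + \<alpha> j) * d j - \<alpha> j * d (j - 1) + 2 * \<alpha> j * (diameter X)\<^sup>2"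
    unfolding d_def w using alpha_nonneg alpha_le_1 by (intro norm_sq_inertial_le) (simp_all add: dist_norm)
  then have "growth j * (norm (w j - u))\<^sup>2
      \<le> growth j * ((1 + \<alpha> j) * d j - \<alpha> j * d (j - 1) + 2 * \<alpha> j * (diameter X)\<^sup>2)"
    using growth_ge_1[of j] by (intro mult_left_mono) auto
  also have "\<dots> = growth j * d j + growth j * \<alpha> j * (d j - d (j - 1)) + 2 * (growth j * \<alpha> j) * (diameter X)\<^sup>2"
    by (simp add: algebra_simps)
  also have "\<dots> \<le> growth j * d j + growth j * \<alpha> j * (d j - d (j - 1)) + 2 * (diameter X)\<^sup>2"
    using mult_right_mono[OF scaled_alpha_le_1[of j] zero_le_power2[of "diameter X"]] by simp
  finally show ?thesis .
qed

lemma weighted_descent_inequality: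
  assumes u: "u \<in> X"
  defines "d \<equiv> \<lambda>j. (norm (x j - u))\<^sup>2"
  shows "2 * (lam j * growth (Suc j)) * (inner (F u) (y j - u) - \<eta> * C\<^sub>H * diameter X) - 2 * (diameter X)\<^sup>2
    \<le> growth j * d j - growth (Suc j) * d (Suc j) + growth j * \<alpha> j * (d j - d (j - 1))"
proof -
  define K where "K = 2 * lam j * \<eta> * C\<^sub>H * diameter X"
  have "growth (Suc j) * (2 * lam j * inner (F u) (y j - u))
      \<le> growth (Suc j) * ((1 - \<beta> j) * (norm (w j - u))\<^sup>2 - d (Suc j) + K)"
    using descent_inequality[OF u, of j] growth_ge_1[of "Suc j"] unfolding d_def K_def
    by (intro mult_left_mono) auto
  moreover have "growth (Suc j) * ((1 - \<beta> j) * (norm (w j - u))\<^sup>2) = growth j * (norm (w j - u))\<^sup>2"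
    using growth_Suc[of j] by (metis mult.assoc)
  moreover have "growth (Suc j) * ((1 - \<beta> j) * (norm (w j - u))\<^sup>2 - d (Suc j) + K)
      = growth (Suc j) * ((1 - \<beta> j) * (norm (w j - u))\<^sup>2) - growth (Suc j) * d (Suc j) + growth (Suc j) * K"
    by (simp add: algebra_simps)
  moreover have "2 * (lam j * growth (Suc j)) * (inner (F u) (y j - u) - \<eta> * C\<^sub>H * diameter X)
      = growth (Suc j) * (2 * lam j * inner (F u) (y j - u)) - growth (Suc j) * K"
    unfolding K_def by (simp add: algebra_simps)
  ultimately have "2 * (lam j * growth (Suc j)) * (inner (F u) (y j - u) - \<eta> * C\<^sub>H * diameter X)
      \<le> growth j * (norm (w j - u))\<^sup>2 - growth (Suc j) * d (Suc j)"
    by linarith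
  then show ?thesis using scaled_inertial_bound[OF u, of j] unfolding d_def by linarith
qed

lemma weighted_gap_sum_le:
  assumes u: "u \<in> X"
  shows "(\<Sum>j<n. weight j * inner (F u) (y j - u))
    \<le> \<eta> * (n + 1) * (diameter X)\<^sup>2 + \<eta> * C\<^sub>H * diameter X * (\<Sum>j<n. weight j)"
proof -
  define a where "a j = lam j * growth (Suc j) * (inner (F u) (y j - u) - \<eta> * C\<^sub>H * diameter X)" for j
  have "(\<Sum>j<n. 2 * a j - 2 * (diameter X)\<^sup>2) \<le> 2 * (diameter X)\<^sup>2"
  proof (rule inertial_telescoping_sum_le[where q = growth and c = "\<lambda>j. growth j * \<alpha> j"
        and d = "\<lambda>j. (norm (x j - u))\<^sup>2"])
    show "2 * a j - 2 * (diameter X)\<^sup>2 \<le> growth j * (norm (x j - u))\<^sup>2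
        - growth (Suc j) * (norm (x (Suc j) - u))\<^sup>2
        + growth j * \<alpha> j * ((norm (x j - u))\<^sup>2 - (norm (x (j - 1) - u))\<^sup>2)" for j
      using weighted_descent_inequality[OF u, of j] by (simp add: a_def mult.assoc)
    show "0 \<le> (norm (x j - u))\<^sup>2 \<and> (norm (x j - u))\<^sup>2 \<le> (diameter X)\<^sup>2" for j
      using diameter_bounded_bound[OF compact_imp_bounded[OF X_compact] iterates_in_X(1) u]
      by (simp add: dist_norm power_mono)
    show "0 \<le> growth j * \<alpha> j" for j
      using growth_ge_1[of j] alpha_nonneg[of j] by simp
    show "0 \<le> growth j" for j
      using growth_ge_1[of j] by simp
  qed (use scaled_alpha_decreasing alpha0 growth_0 in auto)
  then have "(\<Sum>j<n. a j) \<le> (n + 1) * (diameter X)\<^sup>2"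
    by (simp add: sum_subtractf sum_distrib_left[symmetric] distrib_right)
  then have "\<eta> * (\<Sum>j<n. a j) \<le> \<eta> * (n + 1) * (diameter X)\<^sup>2"
    using eta_pos by (simp add: mult.assoc)
  moreover have "\<eta> * (\<Sum>j<n. a j)
      = (\<Sum>j<n. weight j * inner (F u) (y j - u)) - \<eta> * C\<^sub>H * diameter X * (\<Sum>j<n. weight j)"
  proof -
    have "\<eta> * a j = weight j * inner (F u) (y j - u) - \<eta> * C\<^sub>H * diameter X * weight j" for j
      by (simp add: a_def weight_def algebra_simps)
    then show ?thesis by (simp add: sum_distrib_left sum_subtractf)
  qed
  ultimately show ?thesis by linarith
qed

lemma weight_pos: "0 < weight j"
  unfolding weight_def using lam_pos eta_pos growth_ge_1[of "Suc j"] by simp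

lemma weight_sum_ge:
  assumes "1 \<le> n"
  shows "lam (n - 1) * \<eta> * growth n \<le> (\<Sum>j<n. weight j)"
proof -
  have "weight (n - 1) \<le> (\<Sum>j<n. weight j)"
    using assms weight_pos by (intro member_le_sum) (auto intro: less_imp_le)
  then show ?thesis using assms by (simp add: weight_def)
qed

lemma ergodic_avg_gap_le:
  assumes "1 \<le> n"
    and iterations: "2 * \<eta> * (n + 1) * (diameter X)\<^sup>2 \<le> \<epsilon> * (\<Sum>j<n. weight j)"
    and regularization: "2 * \<eta> * C\<^sub>H * diameter X \<le> \<epsilon>"
  shows "0 \<le> Gap (ergodic_avg n) F X \<and> Gap (ergodic_avg n) F X \<le> \<epsilon>"
  unfolding ergodic_avg_def
proof (rule Gap_weighted_average_le)
  show "0 < (\<Sum>j<n. weight j)"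
    using assms(1) weight_pos by (intro sum_pos) (auto simp: lessThan_empty_iff)
  then have "\<eta> * C\<^sub>H * diameter X * (\<Sum>j<n. weight j) \<le> \<epsilon> / 2 * (\<Sum>j<n. weight j)"
    using regularization by (intro mult_right_mono) auto
  then show "(\<Sum>j<n. weight j * inner (F u) (y j - u)) \<le> \<epsilon> * (\<Sum>j<n. weight j)" if "u \<in> X" for u
    using weighted_gap_sum_le[OF that, of n] iterations by (simp add: algebra_simps)
qed (use X_convex iterates_in_X weight_pos[THEN less_imp_le] in auto)

lemma weight_sum_ge_of_iteration_count:
  assumes lam_range: "\<And>j. lam\<^sub>l\<^sub>o \<le> lam j \<and> lam j \<le> lam\<^sub>h\<^sub>i"
    and "0 < lam\<^sub>l\<^sub>o" "lam\<^sub>h\<^sub>i\<^sup>2 * L\<^sup>2 < 1" "0 < \<epsilon>" "1 \<le> n"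
    and n_large: "of_int \<lceil>(1 / (1 - lam\<^sub>h\<^sub>i\<^sup>2 * L\<^sup>2) + 1 / (2 * lam\<^sub>l\<^sub>o * \<eta> * \<mu>))
      * ln (2 * (real n + 1) * (diameter X)\<^sup>2 / (lam\<^sub>l\<^sub>o * \<epsilon>))\<rceil> \<le> real n"
  shows "2 * \<eta> * (real n + 1) * (diameter X)\<^sup>2 \<le> \<epsilon> * (\<Sum>j<n. weight j)"
proof -
  define M where "M = 1 / (1 - lam\<^sub>h\<^sub>i\<^sup>2 * L\<^sup>2) + 1 / (2 * lam\<^sub>l\<^sub>o * \<eta> * \<mu>)"
  have "inverse M \<le> \<beta> j" for j
    using regularized_rate_mono[OF \<open>0 < lam\<^sub>l\<^sub>o\<close> _ _ \<open>lam\<^sub>h\<^sub>i\<^sup>2 * L\<^sup>2 < 1\<close>, of "lam j" "\<eta> * \<mu>"]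
      lam_range[of j] eta_pos mu_pos
    unfolding M_def beta_def by (simp add: mult.assoc)
  moreover have "0 < M"
    unfolding M_def using assms eta_pos mu_pos by (intro add_pos_pos) auto
  ultimately have "2 * (real n + 1) * (diameter X)\<^sup>2 / (lam\<^sub>l\<^sub>o * \<epsilon>) \<le> growth n"
    using le_exp_of_ceiling_mult_ln_le n_large growth_ge_exp unfolding M_def
    by (blast intro: order_trans)
  then have "2 * (real n + 1) * (diameter X)\<^sup>2 \<le> \<epsilon> * (lam\<^sub>l\<^sub>o * growth n)"
    using assms by (simp add: field_simps)
  then have "2 * \<eta> * (real n + 1) * (diameter X)\<^sup>2 \<le> \<epsilon> * (lam\<^sub>l\<^sub>o * \<eta> * growth n)"
    using mult_left_mono[OF _ less_imp_le[OF eta_pos]] by (fastforce simp: mult_ac)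
  also have "\<dots> \<le> \<epsilon> * (\<Sum>j<n. weight j)"
    using weight_sum_ge[OF \<open>1 \<le> n\<close>] lam_range[of "n - 1"] eta_pos \<open>0 < \<epsilon>\<close> growth_ge_1[of n]
    by (smt (verit) mult_left_mono mult_right_mono)
  finally show ?thesis .
qed

lemma regularization_term_le:
  assumes "\<eta> = \<epsilon> / (2 * D0)" "0 < D0" "0 < lam\<^sub>l\<^sub>o" "lam\<^sub>l\<^sub>o \<le> lam\<^sub>h\<^sub>i"
    and D0_ge: "lam\<^sub>h\<^sub>i * C\<^sub>H * diameter X / lam\<^sub>l\<^sub>o \<le> D0"
  shows "2 * \<eta> * C\<^sub>H * diameter X \<le> \<epsilon>"
proof -
  have "0 \<le> C\<^sub>H * diameter X"
    using order_trans[OF norm_ge_zero norm_H_le_C\<^sub>H[OF x0]]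
      diameter_ge_0[OF compact_imp_bounded[OF X_compact]] by simp
  then have "lam\<^sub>l\<^sub>o * (C\<^sub>H * diameter X) \<le> lam\<^sub>h\<^sub>i * (C\<^sub>H * diameter X)"
    using assms by (intro mult_right_mono)
  then have "C\<^sub>H * diameter X \<le> lam\<^sub>h\<^sub>i * C\<^sub>H * diameter X / lam\<^sub>l\<^sub>o"
    using assms by (simp add: field_simps)
  then have "C\<^sub>H * diameter X \<le> D0"
    using D0_ge by linarith
  then have "2 * \<eta> * (C\<^sub>H * diameter X) \<le> 2 * \<eta> * D0"
    using eta_pos by (intro mult_left_mono) auto
  then show ?thesis
    using assms by (simp add: mult.assoc)
qed

end

theorem corollary4p19:
  fixes F H :: "'a::euclidean_space \<Rightarrow> 'a"
    and DomF DomH X \<Omega> :: "'a set"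
    and LF LH \<mu> \<epsilon> D0 \<eta> L lam_lo lam_hi :: real
    and \<alpha> lam \<beta> p \<Lambda> :: "nat \<Rightarrow> real"
    and x w w' y ybar :: "nat \<Rightarrow> 'a"
    and k :: nat
  assumes F_mono: "monotone_op F DomF" and F_lip: "LF-lipschitz_on DomF F" and LF_pos: "LF > 0"
    and H_mono: "monotone_op H DomH" and H_lip: "LH-lipschitz_on DomH H" and LH_pos: "LH > 0"
    and H_strong: "strongly_monotone_op \<mu> H DomH" and mu_pos: "\<mu> > 0"
    and X_ne: "X \<noteq> {}" and X_compact: "compact X" and X_convex: "convex X"
    and Om_ne: "\<Omega> \<noteq> {}" and Om_closed: "closed \<Omega>" and Om_convex: "convex \<Omega>"
    and X_sub: "X \<subseteq> \<Omega>" and Om_sub: "\<Omega> \<subseteq> DomF \<inter> DomH"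
    and Q_ne: "VI_sol F X \<noteq> {}"
    and eps_pos: "\<epsilon> > 0"
    and D0_pos: "D0 > 0"
    and D0_ge: "D0 \<ge> lam_hi * (SUP z\<in>X. norm (H z)) * diameter X / lam_lo"
    and eta_def: "\<eta> = \<epsilon> / (2 * D0)"
    and L_def: "L = LF + \<eta> * LH"
    and lam_lo_pos: "0 < lam_lo" and lam_lo_hi: "lam_lo \<le> lam_hi" and lam_hi_lt: "lam_hi < 1 / L"
    and lam_range: "\<And>j. lam_lo \<le> lam j \<and> lam j \<le> lam_hi"
    and alpha_nonneg: "\<And>j. \<alpha> j \<ge> 0"
    and alpha0: "\<alpha> 0 \<le> 1"
    and beta_def: "\<And>j. \<beta> j = inverse (1 / (1 - (lam j)\<^sup>2 * L\<^sup>2) + 1 / (2 * lam j * \<eta> * \<mu>))"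
    and alpha_dec: "\<And>j. \<alpha> (Suc j) \<le> (1 - \<beta> j) * \<alpha> j"
    and x0: "x 0 \<in> X"
    and w_def: "\<And>j. w j = x j + \<alpha> j *\<^sub>R (x j - (if j = 0 then x 0 else x (j - 1)))"
    and w'_def: "\<And>j. w' j = proj \<Omega> (w j)"
    and y_def: "\<And>j. y j = proj X (w j - lam j *\<^sub>R (F (w' j) + \<eta> *\<^sub>R H (w' j)))"
    and x_def: "\<And>j. x (Suc j) = proj X (w j - lam j *\<^sub>R (F (y j) + \<eta> *\<^sub>R H (y j)))"
    and p_def: "\<And>j. p j = inverse (\<Prod>i\<in>{0..j}. (1 - \<beta> i))"
    and Lambda_def: "\<And>j. j \<ge> 1 \<Longrightarrow> \<Lambda> j = (\<Sum>i<j. lam i * \<eta> * p i)"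
    and ybar_def: "\<And>j. j \<ge> 1 \<Longrightarrow> ybar j = inverse (\<Lambda> j) *\<^sub>R (\<Sum>i<j. (lam i * \<eta> * p i) *\<^sub>R y i)"
    and k_ge1: "k \<ge> 1"
    and k_large: "real k \<ge> of_int \<lceil>(1 / (1 - lam_hi\<^sup>2 * L\<^sup>2) + D0 / (lam_lo * \<mu> * \<epsilon>))
                    * ln (2 * (real k + 1) * (diameter X)\<^sup>2 / (lam_lo * \<epsilon>))\<rceil>"
  shows "0 \<le> Gap (ybar k) F X \<and> Gap (ybar k) F X \<le> \<epsilon>"
proof -
  have eta_pos: "\<eta> > 0" using eta_def eps_pos D0_pos by simp
  have L_pos: "L > 0" using L_def LF_pos LH_pos eta_pos by (simp add: add_pos_pos)
  have lam_hi_L: "lam_hi\<^sup>2 * L\<^sup>2 < 1"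
    using power2_mult_less_1[OF L_pos _ lam_hi_lt] lam_lo_pos lam_lo_hi by simp
  have lam_pos: "lam j > 0" and lam_L: "(lam j)\<^sup>2 * L\<^sup>2 < 1" for j
    using power2_mult_less_1[OF L_pos _ le_less_trans[OF _ lam_hi_lt]] lam_range[of j] lam_lo_pos
    by auto
  interpret ineireg F H DomF DomH X \<Omega> LF LH \<mu> \<eta> L lam \<alpha> \<beta> x w w' y
    by unfold_locales (fact assms eta_pos lam_pos lam_L)+
  have "1 / (2 * lam_lo * \<eta> * \<mu>) = D0 / (lam_lo * \<mu> * \<epsilon>)"
    unfolding eta_def using D0_pos eps_pos mu_pos lam_lo_pos by (simp add: field_simps)
  then have iterations: "2 * \<eta> * (real k + 1) * (diameter X)\<^sup>2 \<le> \<epsilon> * (\<Sum>j<k. weight j)"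
    using weight_sum_ge_of_iteration_count[OF lam_range lam_lo_pos lam_hi_L eps_pos k_ge1] k_large
    by simp
  have regularization: "2 * \<eta> * C\<^sub>H * diameter X \<le> \<epsilon>"
    using regularization_term_le[OF eta_def D0_pos lam_lo_pos lam_lo_hi] D0_ge
    unfolding C\<^sub>H_def by (simp add: mult.assoc)
  have "p j = growth (Suc j)" for j
    unfolding p_def growth_def by (simp add: atLeast0AtMost lessThan_Suc_atMost)
  then have "ybar k = ergodic_avg k"
    using ybar_def[OF k_ge1] Lambda_def[OF k_ge1] unfolding ergodic_avg_def weight_def by simp
  then show ?thesis
    using ergodic_avg_gap_le[OF k_ge1 iterations regularization] by simp
qed

end
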